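(* Let $T=\sum_{k=0}^{N-1}q_kX^k$ be a circulant bistochastic matrix ($\vec q$ a probability vector), with eigen-decomposition $T=\sum_{n=0}^{N-1}\xi_n|x_n\rangle\langle x_n|$, where $|x_n\rangle=\frac1{\sqrt N}\sum_j\omega^{jn}|j\rangle$ and $\xi_n=\sum_k\omega^{-nk}q_k$. Then $T\in\mathcal{A}_N^C$ if and only if there exist logarithms $\ell_n$ ($e^{\ell_n}=\xi_n$, $n=1,\dots,N-1$) with $\overline{\ell_n}=\ell_{-n\oplus N}$ such that for every $m=1,\dots,N-1$ $$t_m=\frac1N\sum_{n=1}^{N-1}\omega^{mn}\,\ell_n$$ is real and non-negative. In that case $T=\exp(\sum_{m=1}^{N-1}t_m\mathcal{K}_m)$.
   Context: Let $N\ge2$, $\omega=e^{2\pi i/N}$, $X$ the $N\times N$ cyclic shift $X|j\rangle=|j\oplus1\rangle$ (addition mod $N$), $\mathcal{K}_m=X^m-\mathbb{I}_N$. $\mathcal{A}_N^C$ is the set of matrices $\exp(\sum_{m=1}^{N-1}t_m\mathcal{K}_m)$ with all $t_m\ge0$. *)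

theory Defs
  imports "HOL-Analysis.Analysis"
begin

text \<open>N x N complex matrices are represented as functions nat => nat => complex;
  only the entries with indices < N are relevant.\<close>

type_synonym cmat = "nat \<Rightarrow> nat \<Rightarrow> complex"

definition mat_id :: cmat where
  "mat_id = (\<lambda>i j. if i = j then 1 else 0)"

definition mat_mult :: "nat \<Rightarrow> cmat \<Rightarrow> cmat \<Rightarrow> cmat" where
  "mat_mult N A B = (\<lambda>i j. \<Sum>k<N. A i k * B k j)"

fun mat_pow :: "nat \<Rightarrow> cmat \<Rightarrow> nat \<Rightarrow> cmat" where
  "mat_pow N A 0 = mat_id"
| "mat_pow N A (Suc n) = mat_mult N (mat_pow N A n) A"

definition mat_exp :: "nat \<Rightarrow> cmat \<Rightarrow> cmat" where
  "mat_exp N A = (\<lambda>i j. \<Sum>k. mat_pow N A k i j / of_nat (fact k))"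

definition mat_eq :: "nat \<Rightarrow> cmat \<Rightarrow> cmat \<Rightarrow> bool" where
  "mat_eq N A B \<longleftrightarrow> (\<forall>i<N. \<forall>j<N. A i j = B i j)"

text \<open>Cyclic shift X|j> = |j+1 mod N>, i.e. X_{ij} = 1 iff i = (j+1) mod N.\<close>
definition shift :: "nat \<Rightarrow> cmat" where
  "shift N = (\<lambda>i j. if i = (j + 1) mod N then 1 else 0)"

definition Kgen :: "nat \<Rightarrow> nat \<Rightarrow> cmat" where
  "Kgen N m = (\<lambda>i j. mat_pow N (shift N) m i j - mat_id i j)"

definition omega :: "nat \<Rightarrow> complex" where
  "omega N = exp (2 * of_real pi * \<i> / of_nat N)"

definition in_AC :: "nat \<Rightarrow> cmat \<Rightarrow> bool" where
  "in_AC N T \<longleftrightarrow> (\<exists>t :: nat \<Rightarrow> real. (\<forall>m\<in>{1..N-1}. t m \<ge> 0) \<and>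
      mat_eq N T (mat_exp N (\<lambda>i j. \<Sum>m=1..N-1. complex_of_real (t m) * Kgen N m i j)))"

definition circulant :: "nat \<Rightarrow> (nat \<Rightarrow> real) \<Rightarrow> cmat" where
  "circulant N q = (\<lambda>i j. \<Sum>k<N. complex_of_real (q k) * mat_pow N (shift N) k i j)"

definition xi :: "nat \<Rightarrow> (nat \<Rightarrow> real) \<Rightarrow> nat \<Rightarrow> complex" where
  "xi N q n = (\<Sum>k<N. inverse (omega N) ^ (n * k) * complex_of_real (q k))"

definition tcoef :: "nat \<Rightarrow> (nat \<Rightarrow> complex) \<Rightarrow> nat \<Rightarrow> complex" where
  "tcoef N l m = (1 / of_nat N) * (\<Sum>n=1..N-1. omega N ^ (m * n) * l n)"

end

theory Submission
  imports Defs
begin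

text \<open>The discrete Fourier transform diagonalises everything in sight: the shift X acts on
  the eigenvector x_n as the scalar omega^(-n), so T becomes diag(xi_n) and the generator
  sum_m t_m K_m becomes diag(lambda_n) with lambda_n = sum_m t_m (omega^(-mn) - 1). Hence
  T = exp(sum_m t_m K_m) exactly when exp(lambda_n) = xi_n for every n. Since lambda_0 = 0,
  orthogonality of the characters of Z/NZ inverts t \<mapsto> lambda by
  t_m = (1/N) sum_(n\<ge>1) omega^(mn) lambda_n, and lambda_(N-n) = cnj lambda_n for real t.
  So the admissible logarithms are exactly the eigenvalue vectors lambda of generators
  with t \<ge> 0.\<close>

lemma omega_power: "omega N ^ j = exp (2 * of_real pi * \<i> * of_nat j / of_nat N)"
  unfolding omega_def exp_of_nat_mult[symmetric] by (simp add: algebra_simps)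

lemma omega_power_eq_iff: "0 < N \<Longrightarrow> omega N ^ a = omega N ^ b \<longleftrightarrow> a mod N = b mod N"
  unfolding omega_power by (rule complex_root_unity_eq) simp

lemma omega_nonzero [simp]: "omega N \<noteq> 0"
  by (simp add: omega_def)

lemma omega_power_self: "0 < N \<Longrightarrow> omega N ^ N = 1"
  using omega_power_eq_iff[of N N 0] by simp

lemma cnj_omega: "cnj (omega N) = inverse (omega N)"
  unfolding omega_def by (simp add: exp_cnj exp_minus[symmetric])

lemma sum_omega_orthogonal:
  assumes "0 < N"
  shows "(\<Sum>k<N. omega N ^ (a * k) * inverse (omega N) ^ (b * k)) =
    (if a mod N = b mod N then of_nat N else 0)"
proof -
  define z where "z = omega N ^ a * inverse (omega N ^ b)"
  have z_power: "omega N ^ (a * k) * inverse (omega N) ^ (b * k) = z ^ k" for k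
    by (simp add: z_def power_mult power_mult_distrib power_inverse)
  have "z ^ N = (omega N ^ N) ^ a * inverse ((omega N ^ N) ^ b)"
    unfolding z_def power_mult_distrib power_inverse by (simp flip: power_mult add: mult.commute)
  then have "z ^ N = 1"
    using omega_power_self[OF assms] by simp
  moreover have "z = 1 \<longleftrightarrow> a mod N = b mod N"
    using omega_power_eq_iff[OF assms, of a b] by (auto simp: z_def field_simps)
  ultimately show ?thesis
    by (cases "z = 1") (simp_all add: z_power geometric_sum)
qed

text \<open>The term for k = 0 vanishes, and the subtracted sum of the nontrivial character a is 0.\<close>
lemma sum_omega_orthogonal_punctured:
  assumes "a \<in> {1..N-1}" and "b < N"
  shows "(\<Sum>k=1..N-1. omega N ^ (a * k) * (inverse (omega N) ^ (b * k) - 1)) =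
    (if a = b then of_nat N else 0)"
proof -
  have N: "0 < N"
    using assms(2) by simp
  have a_mod: "a mod N = a"
    using assms(1) by auto
  have "{..<N} = insert 0 {1..N-1}"
    using N by auto
  then have "(\<Sum>k=1..N-1. omega N ^ (a * k) * (inverse (omega N) ^ (b * k) - 1)) =
      (\<Sum>k<N. omega N ^ (a * k) * inverse (omega N) ^ (b * k)) -
      (\<Sum>k<N. omega N ^ (a * k) * inverse (omega N) ^ (0 * k))"
    by (simp add: right_diff_distrib sum_subtractf)
  then show ?thesis
    using assms a_mod sum_omega_orthogonal[OF N, of a b] sum_omega_orthogonal[OF N, of a 0] by auto
qed

subsection \<open>Matrices diagonal in the Fourier basis\<close>

text \<open>\<open>fourier_diag N a\<close> is sum_n a_n |x_n\<rangle>\<langle>x_n|, the matrix acting on the eigenvector x_n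
  as the scalar a_n.\<close>
definition fourier_diag :: "nat \<Rightarrow> (nat \<Rightarrow> complex) \<Rightarrow> cmat" where
  "fourier_diag N a = (\<lambda>i j. (1 / of_nat N) *
     (\<Sum>n<N. omega N ^ (i * n) * inverse (omega N) ^ (j * n) * a n))"

lemma fourier_diag_cong: "(\<And>n. n < N \<Longrightarrow> a n = b n) \<Longrightarrow> fourier_diag N a = fourier_diag N b"
  unfolding fourier_diag_def by (intro ext arg_cong2[where f = "(*)"] refl sum.cong) auto

lemma fourier_diag_sum:
  "fourier_diag N (\<lambda>n. \<Sum>m\<in>S. c m * f m n) i j = (\<Sum>m\<in>S. c m * fourier_diag N (f m) i j)"
  unfolding fourier_diag_def
  by (simp add: sum_distrib_left sum_distrib_right mult_ac sum.swap[of _ S])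

lemma fourier_diag_diff:
  "fourier_diag N (\<lambda>n. f n - g n) i j = fourier_diag N f i j - fourier_diag N g i j"
  unfolding fourier_diag_def by (simp add: algebra_simps sum_subtractf)

lemma fourier_diag_one:
  assumes "0 < N" "i < N" "j < N"
  shows "fourier_diag N (\<lambda>_. 1) i j = mat_id i j"
  using sum_omega_orthogonal[OF assms(1), of i j] assms
  unfolding fourier_diag_def mat_id_def by (simp add: mult.commute)

lemma mat_mult_fourier_diag:
  assumes N: "0 < N"
  shows "mat_mult N (fourier_diag N a) (fourier_diag N b) i j = fourier_diag N (\<lambda>n. a n * b n) i j"
proof -
  let ?w = "omega N" and ?v = "inverse (omega N)"
  define c :: complex where "c = 1 / of_nat N * (1 / of_nat N)"
  have "mat_mult N (fourier_diag N a) (fourier_diag N b) i j =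
      (\<Sum>k<N. \<Sum>n<N. \<Sum>n'<N. c * (?w^(i*n') * ?v^(j*n) * a n' * b n) * (?w^(n*k) * ?v^(n'*k)))"
    unfolding mat_mult_def fourier_diag_def c_def by (simp add: sum_product sum_distrib_left mult_ac)
  also have "\<dots> =
      (\<Sum>n<N. \<Sum>n'<N. \<Sum>k<N. c * (?w^(i*n') * ?v^(j*n) * a n' * b n) * (?w^(n*k) * ?v^(n'*k)))"
    by (rule trans[OF sum.swap], rule sum.cong[OF refl], rule sum.swap)
  also have "\<dots> =
      (\<Sum>n<N. \<Sum>n'<N. c * (?w^(i*n') * ?v^(j*n) * a n' * b n) * (\<Sum>k<N. ?w^(n*k) * ?v^(n'*k)))"
    by (simp add: sum_distrib_left)
  also have "\<dots> = (\<Sum>n<N. \<Sum>n'<N. c * (?w^(i*n') * ?v^(j*n) * a n' * b n) *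
      (if n' = n then of_nat N else 0))"
    by (intro sum.cong refl) (simp add: sum_omega_orthogonal[OF N])
  also have "\<dots> = fourier_diag N (\<lambda>n. a n * b n) i j"
    unfolding fourier_diag_def c_def using N
    by (simp add: if_distrib sum.delta sum.delta' sum_distrib_left mult_ac cong: if_cong)
  finally show ?thesis .
qed

lemma mat_pow_fourier_diag:
  assumes "0 < N" and "mat_eq N A (fourier_diag N a)"
  shows "mat_eq N (mat_pow N A k) (fourier_diag N (\<lambda>n. a n ^ k))"
proof (induction k)
  case 0
  then show ?case
    using fourier_diag_one[OF assms(1)] by (simp add: mat_eq_def)
next
  case (Suc k)
  have "mat_pow N A (Suc k) i j = mat_mult N (fourier_diag N (\<lambda>n. a n ^ k)) (fourier_diag N a) i j"
    if "i < N" "j < N" for i j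
    using Suc assms(2) that unfolding mat_eq_def by (auto simp: mat_mult_def intro!: sum.cong)
  then show ?case
    unfolding mat_eq_def mat_mult_fourier_diag[OF assms(1)] by (simp add: mult.commute)
qed

lemma mat_exp_fourier_diag:
  assumes "0 < N" and "mat_eq N A (fourier_diag N a)"
  shows "mat_eq N (mat_exp N A) (fourier_diag N (\<lambda>n. exp (a n)))"
  unfolding mat_eq_def
proof (intro allI impI)
  fix i j assume ij: "i < N" "j < N"
  define c where "c n = 1 / of_nat N * (omega N ^ (i * n) * inverse (omega N) ^ (j * n))" for n
  have term_eq: "mat_pow N A k i j / of_nat (fact k) = (\<Sum>n<N. c n * (a n ^ k / of_nat (fact k)))" for k
    using mat_pow_fourier_diag[OF assms, of k] ij
    unfolding mat_eq_def fourier_diag_def c_def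
    by (simp add: sum_distrib_left sum_divide_distrib mult_ac)
  have "(\<lambda>k. a n ^ k / of_nat (fact k)) sums exp (a n)" for n
    using exp_converges[of "a n"] by (simp add: scaleR_conv_of_real divide_inverse mult.commute)
  then have "(\<lambda>k. mat_pow N A k i j / of_nat (fact k)) sums (\<Sum>n<N. c n * exp (a n))"
    unfolding term_eq by (intro sums_sum sums_mult)
  then show "mat_exp N A i j = fourier_diag N (\<lambda>n. exp (a n)) i j"
    unfolding mat_exp_def fourier_diag_def c_def
    by (simp add: sums_iff sum_distrib_left mult_ac)
qed

lemma fourier_diag_inversion:
  assumes N: "0 < N" and "n < N"
  shows "(\<Sum>i<N. fourier_diag N a i 0 * inverse (omega N) ^ (i * n)) = a n"
proof -
  have "(\<Sum>i<N. fourier_diag N a i 0 * inverse (omega N) ^ (i * n)) =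
      (\<Sum>i<N. \<Sum>n'<N. 1 / of_nat N * a n' * (omega N ^ (n' * i) * inverse (omega N) ^ (n * i)))"
    unfolding fourier_diag_def by (simp add: sum_distrib_left sum_distrib_right mult_ac)
  also have "\<dots> =
      (\<Sum>n'<N. 1 / of_nat N * a n' * (\<Sum>i<N. omega N ^ (n' * i) * inverse (omega N) ^ (n * i)))"
    by (subst sum.swap) (simp add: sum_distrib_left)
  also have "\<dots> = a n"
    using assms by (simp add: sum_omega_orthogonal if_distrib sum.delta cong: if_cong)
  finally show ?thesis .
qed

lemma fourier_diag_eq_iff:
  assumes "0 < N"
  shows "mat_eq N (fourier_diag N a) (fourier_diag N b) \<longleftrightarrow> (\<forall>n<N. a n = b n)"
proof
  assume eq: "mat_eq N (fourier_diag N a) (fourier_diag N b)"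
  show "\<forall>n<N. a n = b n"
  proof (intro allI impI)
    fix n assume n: "n < N"
    have "a n = (\<Sum>i<N. fourier_diag N a i 0 * inverse (omega N) ^ (i * n))"
      using fourier_diag_inversion[OF assms n] by simp
    also have "\<dots> = (\<Sum>i<N. fourier_diag N b i 0 * inverse (omega N) ^ (i * n))"
      using eq assms unfolding mat_eq_def by (intro sum.cong) auto
    also have "\<dots> = b n"
      using fourier_diag_inversion[OF assms n] .
    finally show "a n = b n" .
  qed
next
  assume "\<forall>n<N. a n = b n"
  then show "mat_eq N (fourier_diag N a) (fourier_diag N b)"
    using fourier_diag_cong[of N a b] by (simp add: mat_eq_def)
qed

subsection \<open>Circulants and their generators\<close>

lemma shift_eq_fourier_diag:
  assumes N: "0 < N" and "i < N" "j < N"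
  shows "shift N i j = fourier_diag N (\<lambda>n. inverse (omega N) ^ n) i j"
proof -
  have "fourier_diag N (\<lambda>n. inverse (omega N) ^ n) i j =
      1 / of_nat N * (\<Sum>n<N. omega N ^ (i * n) * inverse (omega N) ^ (Suc j * n))"
    unfolding fourier_diag_def by (simp add: power_add algebra_simps)
  also have "\<dots> = (if i mod N = Suc j mod N then 1 else 0)"
    using sum_omega_orthogonal[OF N, of i "Suc j"] N by simp
  finally show ?thesis
    using assms by (simp add: shift_def)
qed

lemma mat_pow_shift_eq_fourier_diag:
  assumes "0 < N"
  shows "mat_eq N (mat_pow N (shift N) k) (fourier_diag N (\<lambda>n. inverse (omega N) ^ (k * n)))"
  using mat_pow_fourier_diag[OF assms, of "shift N" "\<lambda>n. inverse (omega N) ^ n" k]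
    shift_eq_fourier_diag[OF assms]
  by (simp add: mat_eq_def power_mult mult.commute)

lemma xi_eq: "xi N q n = (\<Sum>k<N. complex_of_real (q k) * inverse (omega N) ^ (k * n))"
  unfolding xi_def by (simp add: mult_ac)

lemma xi_zero: "(\<Sum>k<N. q k) = 1 \<Longrightarrow> xi N q 0 = 1"
  unfolding xi_def by (simp flip: of_real_sum)

lemma circulant_eq_fourier_diag:
  assumes "0 < N"
  shows "mat_eq N (circulant N q) (fourier_diag N (xi N q))"
  using mat_pow_shift_eq_fourier_diag[OF assms]
  unfolding mat_eq_def circulant_def xi_eq fourier_diag_sum by simp

abbreviation generator :: "nat \<Rightarrow> (nat \<Rightarrow> real) \<Rightarrow> cmat" where
  "generator N t \<equiv> \<lambda>i j. \<Sum>m=1..N-1. complex_of_real (t m) * Kgen N m i j"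

definition generator_eigenvalue :: "nat \<Rightarrow> (nat \<Rightarrow> real) \<Rightarrow> nat \<Rightarrow> complex" where
  "generator_eigenvalue N t n =
     (\<Sum>m=1..N-1. complex_of_real (t m) * (inverse (omega N) ^ (m * n) - 1))"

lemma generator_eq_fourier_diag:
  assumes "0 < N"
  shows "mat_eq N (generator N t) (fourier_diag N (generator_eigenvalue N t))"
proof -
  have "mat_eq N (Kgen N m) (fourier_diag N (\<lambda>n. inverse (omega N) ^ (m * n) - 1))" for m
    using mat_pow_shift_eq_fourier_diag[OF assms] fourier_diag_one[OF assms]
    unfolding mat_eq_def by (simp add: Kgen_def fourier_diag_diff)
  then show ?thesis
    unfolding generator_eigenvalue_def fourier_diag_sum mat_eq_def by simp
qed

lemma circulant_eq_exp_generator_iff: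
  assumes "0 < N"
  shows "mat_eq N (circulant N q) (mat_exp N (generator N t)) \<longleftrightarrow>
    (\<forall>n<N. exp (generator_eigenvalue N t n) = xi N q n)"
proof -
  have "mat_eq N (circulant N q) (mat_exp N (generator N t)) \<longleftrightarrow>
      mat_eq N (fourier_diag N (xi N q)) (fourier_diag N (\<lambda>n. exp (generator_eigenvalue N t n)))"
    using circulant_eq_fourier_diag[OF assms, of q]
      mat_exp_fourier_diag[OF assms generator_eq_fourier_diag[OF assms, of t]]
    unfolding mat_eq_def by auto
  also have "\<dots> \<longleftrightarrow> (\<forall>n<N. exp (generator_eigenvalue N t n) = xi N q n)"
    unfolding fourier_diag_eq_iff[OF assms] by auto
  finally show ?thesis .
qed

subsection \<open>Inverting t \<mapsto> lambda\<close>

lemma generator_eigenvalue_zero [simp]: "generator_eigenvalue N t 0 = 0"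
  by (simp add: generator_eigenvalue_def)

lemma tcoef_generator_eigenvalue:
  assumes N: "0 < N" and m: "m \<in> {1..N-1}"
  shows "tcoef N (generator_eigenvalue N t) m = complex_of_real (t m)"
proof -
  have "tcoef N (generator_eigenvalue N t) m = 1 / of_nat N * (\<Sum>n=1..N-1. \<Sum>m'=1..N-1.
      complex_of_real (t m') * (omega N ^ (m * n) * (inverse (omega N) ^ (m' * n) - 1)))"
    unfolding tcoef_def generator_eigenvalue_def by (simp add: sum_distrib_left mult_ac)
  also have "\<dots> = 1 / of_nat N * (\<Sum>m'=1..N-1. complex_of_real (t m') *
      (\<Sum>n=1..N-1. omega N ^ (m * n) * (inverse (omega N) ^ (m' * n) - 1)))"
    by (subst sum.swap) (simp add: sum_distrib_left)
  also have "\<dots> = 1 / of_nat N * (\<Sum>m'=1..N-1. complex_of_real (t m') * (if m = m' then of_nat N else 0))"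
    using m sum_omega_orthogonal_punctured[OF m] by (intro arg_cong2[where f = "(*)"] refl sum.cong) auto
  also have "\<dots> = complex_of_real (t m)"
    using N m by (simp add: if_distrib sum.delta' cong: if_cong)
  finally show ?thesis .
qed

lemma generator_eigenvalue_tcoef:
  assumes N: "0 < N" and real: "\<forall>m\<in>{1..N-1}. tcoef N l m \<in> \<real>" and n: "n \<in> {1..N-1}"
  shows "generator_eigenvalue N (\<lambda>m. Re (tcoef N l m)) n = l n"
proof -
  have "generator_eigenvalue N (\<lambda>m. Re (tcoef N l m)) n =
      (\<Sum>m=1..N-1. tcoef N l m * (inverse (omega N) ^ (m * n) - 1))"
    unfolding generator_eigenvalue_def using real by (intro sum.cong refl) (auto elim!: Reals_cases)
  also have "\<dots> = (\<Sum>m=1..N-1. \<Sum>n'=1..N-1.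
      1 / of_nat N * l n' * (omega N ^ (n' * m) * (inverse (omega N) ^ (n * m) - 1)))"
    unfolding tcoef_def by (simp add: sum_distrib_left sum_distrib_right mult_ac)
  also have "\<dots> = (\<Sum>n'=1..N-1. 1 / of_nat N * l n' *
      (\<Sum>m=1..N-1. omega N ^ (n' * m) * (inverse (omega N) ^ (n * m) - 1)))"
    by (subst sum.swap) (simp add: sum_distrib_left)
  also have "\<dots> = (\<Sum>n'=1..N-1. 1 / of_nat N * l n' * (if n' = n then of_nat N else 0))"
    using n sum_omega_orthogonal_punctured[of _ N n] by (intro sum.cong refl) auto
  also have "\<dots> = l n"
    using N n by (simp add: if_distrib sum.delta cong: if_cong)
  finally show ?thesis .
qed

lemma cnj_generator_eigenvalue:
  assumes N: "0 < N" and n: "n \<in> {1..N-1}"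
  shows "cnj (generator_eigenvalue N t n) = generator_eigenvalue N t ((N - n) mod N)"
proof -
  have "inverse (omega N) ^ (m * (N - n)) = omega N ^ (m * n)" for m
  proof -
    have "m * n + m * (N - n) = N * m"
      using n by (auto simp: add_mult_distrib2[symmetric])
    then have "omega N ^ (m * n) * omega N ^ (m * (N - n)) = (omega N ^ N) ^ m"
      by (simp flip: power_add power_mult)
    then show ?thesis
      using omega_power_self[OF N] by (simp add: power_inverse field_simps)
  qed
  moreover have "(N - n) mod N = N - n"
    using n by auto
  ultimately show ?thesis
    unfolding generator_eigenvalue_def by (simp add: cnj_omega)
qed

definition admissible_logarithm :: "nat \<Rightarrow> (nat \<Rightarrow> real) \<Rightarrow> (nat \<Rightarrow> complex) \<Rightarrow> bool" where
  "admissible_logarithm N q l \<longleftrightarrow>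
     (\<forall>n\<in>{1..N-1}. exp (l n) = xi N q n) \<and>
     (\<forall>n\<in>{1..N-1}. cnj (l n) = l ((N - n) mod N)) \<and>
     (\<forall>m\<in>{1..N-1}. tcoef N l m \<in> \<real> \<and> Re (tcoef N l m) \<ge> 0)"

lemma circulant_eq_exp_if_admissible_logarithm:
  assumes "0 < N" and "(\<Sum>k<N. q k) = 1" and "admissible_logarithm N q l"
  shows "mat_eq N (circulant N q) (mat_exp N (generator N (\<lambda>m. Re (tcoef N l m))))"
proof -
  have "exp (generator_eigenvalue N (\<lambda>m. Re (tcoef N l m)) n) = xi N q n" if "n < N" for n
  proof (cases "n = 0")
    case True
    then show ?thesis
      using assms(2) by (simp add: xi_zero)
  next
    case False
    then show ?thesis
      using that assms(3) generator_eigenvalue_tcoef[OF assms(1), of l n]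
      by (simp add: admissible_logarithm_def)
  qed
  then show ?thesis
    unfolding circulant_eq_exp_generator_iff[OF assms(1)] by blast
qed

lemma admissible_logarithm_if_circulant_eq_exp:
  assumes "0 < N" and "\<forall>m\<in>{1..N-1}. t m \<ge> 0"
    and "mat_eq N (circulant N q) (mat_exp N (generator N t))"
  shows "admissible_logarithm N q (generator_eigenvalue N t)"
proof -
  have "\<forall>n<N. exp (generator_eigenvalue N t n) = xi N q n"
    using assms(3) by (simp only: circulant_eq_exp_generator_iff[OF assms(1)])
  then show ?thesis
    using assms(1,2) unfolding admissible_logarithm_def
    by (auto simp: cnj_generator_eigenvalue tcoef_generator_eigenvalue)
qed

lemma in_AC_circulant_iff:
  assumes "0 < N" and "(\<Sum>k<N. q k) = 1"
  shows "in_AC N (circulant N q) \<longleftrightarrow> (\<exists>l. admissible_logarithm N q l)"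
proof
  assume "in_AC N (circulant N q)"
  then obtain t where "\<forall>m\<in>{1..N-1}. t m \<ge> 0"
    and "mat_eq N (circulant N q) (mat_exp N (generator N t))"
    unfolding in_AC_def by blast
  then show "\<exists>l. admissible_logarithm N q l"
    using admissible_logarithm_if_circulant_eq_exp[OF assms(1)] by blast
next
  assume "\<exists>l. admissible_logarithm N q l"
  then obtain l where l: "admissible_logarithm N q l" ..
  then have "\<forall>m\<in>{1..N-1}. Re (tcoef N l m) \<ge> 0"
    unfolding admissible_logarithm_def by blast
  with circulant_eq_exp_if_admissible_logarithm[OF assms l] show "in_AC N (circulant N q)"
    unfolding in_AC_def by (intro exI[of _ "\<lambda>m. Re (tcoef N l m)"] conjI)
qed

theorem theorem2:
  fixes N :: nat and q :: "nat \<Rightarrow> real"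
  assumes "N \<ge> 2"
    and "\<forall>k<N. q k \<ge> 0"
    and "(\<Sum>k<N. q k) = 1"
  shows "(in_AC N (circulant N q) \<longleftrightarrow>
          (\<exists>l :: nat \<Rightarrow> complex.
             (\<forall>n\<in>{1..N-1}. exp (l n) = xi N q n) \<and>
             (\<forall>n\<in>{1..N-1}. cnj (l n) = l ((N - n) mod N)) \<and>
             (\<forall>m\<in>{1..N-1}. tcoef N l m \<in> \<real> \<and> Re (tcoef N l m) \<ge> 0)))
     \<and> (\<forall>l :: nat \<Rightarrow> complex.
             (\<forall>n\<in>{1..N-1}. exp (l n) = xi N q n) \<and>
             (\<forall>n\<in>{1..N-1}. cnj (l n) = l ((N - n) mod N)) \<and>
             (\<forall>m\<in>{1..N-1}. tcoef N l m \<in> \<real> \<and> Re (tcoef N l m) \<ge> 0)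
           \<longrightarrow> mat_eq N (circulant N q)
                 (mat_exp N (\<lambda>i j. \<Sum>m=1..N-1. complex_of_real (Re (tcoef N l m)) * Kgen N m i j)))"
proof -
  have N: "0 < N"
    using assms(1) by simp
  note exp_form = circulant_eq_exp_if_admissible_logarithm[OF N assms(3)]
  have "in_AC N (circulant N q) \<longleftrightarrow> (\<exists>l. admissible_logarithm N q l)"
    using in_AC_circulant_iff[OF N assms(3)] .
  moreover have "\<forall>l. admissible_logarithm N q l \<longrightarrow>
      mat_eq N (circulant N q) (mat_exp N (generator N (\<lambda>m. Re (tcoef N l m))))"
    using exp_form by blast
  ultimately show ?thesis
    unfolding admissible_logarithm_def by (rule conjI)
qed

end
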